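(* Let $C=C(m,n;k,l;c,d)$ be a $C$-shaped supergrid graph with $a=m-k=1$, and let $s,t$ be two distinct vertices of $C$ (labeled so that $s_x\leq t_x$) such that $(C,s,t)$ satisfies none of the conditions: (F1) $s$ or $t$ is a cut vertex of $C$, or $\{s,t\}$ is a vertex cut of $C$; (F3) there is a vertex $w\in V(C)$ with $\deg(w)=1$, $w\neq s$, $w\neq t$; (F9) $a=1$, and ($s_y,t_y\leq c$ or $s_y,t_y>c+l$). Then $C$ contains a Hamiltonian path from $s$ to $t$.
   Context: The supergrid graph $S^\infty$ has vertex set $\mathbb{Z}^2$, two distinct vertices $u,v$ being adjacent iff $|u_x-v_x|\leq 1$ and $|u_y-v_y|\leq 1$; a supergrid graph is a finite vertex-induced subgraph of $S^\infty$. For integers $m\geq 2$, $n\geq 3$, $k,l,c\geq 1$ with $d=n-l-c\geq 1$ and $a=m-k\geq 1$, $C(m,n;k,l;c,d)$ is the supergrid graph induced by $\{(x,y):1\leq x\leq m,\ 1\leq y\leq n\}\setminus\{(x,y): a+1\leq x\leq m,\ c+1\leq y\leq c+l\}$. A cut vertex $v$: $C-v$ disconnected; a vertex cut $V_1$: $C-V_1$ disconnected. A Hamiltonian path from $s$ to $t$ is a simple path from $s$ to $t$ visiting every vertex exactly once. *)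

theory Defs
  imports Main
begin

type_synonym vtx = "int \<times> int"

definition sg_adj :: "vtx \<Rightarrow> vtx \<Rightarrow> bool" where
  "sg_adj u v \<longleftrightarrow> u \<noteq> v \<and> \<bar>fst u - fst v\<bar> \<le> 1 \<and> \<bar>snd u - snd v\<bar> \<le> 1"

text \<open>Vertex set of C(m,n;k,l;c,d), with d = n - l - c.\<close>
definition C_shape :: "int \<Rightarrow> int \<Rightarrow> int \<Rightarrow> int \<Rightarrow> int \<Rightarrow> vtx set" where
  "C_shape m n k l c =
     {(x, y). 1 \<le> x \<and> x \<le> m \<and> 1 \<le> y \<and> y \<le> n}
     - {(x, y). m - k + 1 \<le> x \<and> x \<le> m \<and> c + 1 \<le> y \<and> y \<le> c + l}"

definition is_path_in :: "vtx set \<Rightarrow> vtx list \<Rightarrow> bool" where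
  "is_path_in V p \<longleftrightarrow> p \<noteq> [] \<and> set p \<subseteq> V \<and>
     (\<forall>i. Suc i < length p \<longrightarrow> sg_adj (p ! i) (p ! Suc i))"

definition sg_connected :: "vtx set \<Rightarrow> bool" where
  "sg_connected V \<longleftrightarrow> (\<forall>u\<in>V. \<forall>v\<in>V. \<exists>p. is_path_in V p \<and> hd p = u \<and> last p = v)"

definition is_cut_vertex :: "vtx set \<Rightarrow> vtx \<Rightarrow> bool" where
  "is_cut_vertex V v \<longleftrightarrow> v \<in> V \<and> \<not> sg_connected (V - {v})"

definition is_vertex_cut :: "vtx set \<Rightarrow> vtx set \<Rightarrow> bool" where
  "is_vertex_cut V W \<longleftrightarrow> W \<subseteq> V \<and> \<not> sg_connected (V - W)"

definition sg_degree :: "vtx set \<Rightarrow> vtx \<Rightarrow> nat" where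
  "sg_degree V w = card {u \<in> V. sg_adj w u}"

definition is_ham_path :: "vtx set \<Rightarrow> vtx \<Rightarrow> vtx \<Rightarrow> vtx list \<Rightarrow> bool" where
  "is_ham_path V s t p \<longleftrightarrow> is_path_in V p \<and> distinct p \<and> set p = V \<and> hd p = s \<and> last p = t"

end

theory Submission
  imports Defs
begin

text \<open>
  With \<open>a = 1\<close> the graph is a bottom rectangle \<open>{1..m} \<times> {1..c}\<close>, the column
  \<open>{1} \<times> {c+1..c+l}\<close> and a top rectangle \<open>{1..m} \<times> {c+l+1..n}\<close>. Every column vertex
  is a cut vertex, because adjacent vertices differ by at most one in height, so a path from
  bottom to top meets every row. Hence (F1) puts \<open>s\<close> and \<open>t\<close> into the rectangles and
  (F9) into different ones. The Hamiltonian path traverses the rectangle of \<open>s\<close> from \<open>s\<close> to a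
  vertex next to the column, climbs the column, and traverses the other rectangle ending in
  \<open>t\<close>. In a rectangle with at least two rows and two columns there is a Hamiltonian path from
  any vertex to any other corner (peel off a boundary row or column and recurse). A rectangle
  that is a single row can only be traversed from its far end, and (F3) forces this, since
  otherwise the far corner would be a vertex of degree one distinct from \<open>s\<close> and \<open>t\<close>.
\<close>

definition ham_connected :: "vtx set \<Rightarrow> vtx \<Rightarrow> vtx \<Rightarrow> bool" where
  "ham_connected V s t \<longleftrightarrow> (\<exists>p. is_ham_path V s t p)"

lemma is_path_in_iff_successively:
  "is_path_in V p \<longleftrightarrow> p \<noteq> [] \<and> set p \<subseteq> V \<and> successively sg_adj p"
  unfolding is_path_in_def successively_conv_nth ..

lemma sg_adj_commute: "sg_adj u v \<longleftrightarrow> sg_adj v u"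
  unfolding sg_adj_def by auto

lemma ham_connected_singleton: "ham_connected {v} v v"
  unfolding ham_connected_def is_ham_path_def is_path_in_def
  by (rule exI[of _ "[v]"]) auto

lemma ham_connected_join:
  assumes "ham_connected A s e" "ham_connected B f t" "sg_adj e f" "A \<inter> B = {}" "A \<union> B = V"
  shows "ham_connected V s t"
proof -
  obtain p q where "is_ham_path A s e p" "is_ham_path B f t q"
    using assms(1,2) unfolding ham_connected_def by blast
  then have "is_ham_path V s t (p @ q)"
    using assms(3-5) by (auto simp: is_ham_path_def is_path_in_iff_successively successively_append_iff)
  then show ?thesis
    unfolding ham_connected_def by blast
qed

lemma ham_connected_sym: "ham_connected V s t \<Longrightarrow> ham_connected V t s"
proof -
  assume "ham_connected V s t"
  then obtain p where "is_ham_path V s t p"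
    unfolding ham_connected_def by blast
  then have "is_ham_path V t s (rev p)"
    by (auto simp: is_ham_path_def is_path_in_iff_successively hd_rev last_rev sg_adj_commute)
  then show ?thesis
    unfolding ham_connected_def by blast
qed

lemma ham_connected_image:
  assumes "ham_connected V s t" "inj_on f V" "\<And>u v. sg_adj u v \<Longrightarrow> sg_adj (f u) (f v)"
  shows "ham_connected (f ` V) (f s) (f t)"
proof -
  obtain p where p: "is_ham_path V s t p"
    using assms(1) unfolding ham_connected_def by blast
  have "is_ham_path (f ` V) (f s) (f t) (map f p)"
    using p assms(2,3)
    by (auto simp: is_ham_path_def is_path_in_iff_successively successively_map hd_map last_map
        distinct_map elim: successively_mono)
  then show ?thesis
    unfolding ham_connected_def by blast
qed

lemma ham_connected_column: "y1 \<le> y2 \<Longrightarrow> ham_connected ({x} \<times> {y1..y2}) (x, y1) (x, y2)"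
proof (induction "nat (y2 - y1)" arbitrary: y2)
  case 0
  then have "{x} \<times> {y1..y2} = {(x, y2)}"
    by auto
  then show ?case
    using 0 ham_connected_singleton by simp
next
  case (Suc k)
  then have "ham_connected ({x} \<times> {y1..y2 - 1}) (x, y1) (x, y2 - 1)"
    by simp
  then show ?case
    by (rule ham_connected_join[OF _ ham_connected_singleton]) (use Suc.hyps(2) in \<open>auto simp: sg_adj_def\<close>)
qed

lemma ham_connected_row: "x1 \<le> x2 \<Longrightarrow> ham_connected ({x1..x2} \<times> {y}) (x1, y) (x2, y)"
proof -
  assume "x1 \<le> x2"
  then have "ham_connected (prod.swap ` ({y} \<times> {x1..x2})) (prod.swap (y, x1)) (prod.swap (y, x2))"
    by (intro ham_connected_image ham_connected_column) (auto simp: sg_adj_def)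
  then show ?thesis
    by (simp add: product_swap)
qed

lemma ham_connected_two_rows:
  "x1 \<le> x2 \<Longrightarrow> ham_connected ({x1..x2} \<times> {y..y + 1}) (x1, y) (x1, y + 1)"
  by (rule ham_connected_join[OF ham_connected_row ham_connected_sym[OF ham_connected_row]])
    (auto simp: sg_adj_def)

lemma ham_connected_two_rows_from_second:
  assumes "x1 + 2 \<le> x2"
  shows "ham_connected ({x1..x2} \<times> {y..y + 1}) (x1 + 1, y) (x1, y + 1)"
proof -
  have left: "ham_connected ({x1} \<times> {y..y + 1}) (x1, y) (x1, y + 1)"
    using ham_connected_column[of y "y + 1" x1] by simp
  have "ham_connected ({(x1 + 1, y + 1)} \<union> {x1} \<times> {y..y + 1}) (x1 + 1, y + 1) (x1, y + 1)"
    by (rule ham_connected_join[OF ham_connected_singleton left]) (auto simp: sg_adj_def)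
  with assms have "ham_connected ({x1 + 2..x2} \<times> {y..y + 1} \<union> ({(x1 + 1, y + 1)} \<union> {x1} \<times> {y..y + 1}))
      (x1 + 2, y) (x1, y + 1)"
    by (intro ham_connected_join[OF ham_connected_two_rows]) (auto simp: sg_adj_def)
  then show ?thesis
    by (rule ham_connected_join[OF ham_connected_singleton]) (use assms in \<open>auto simp: sg_adj_def\<close>)
qed

lemma ham_connected_two_columns:
  "y1 \<le> y2 \<Longrightarrow> ham_connected ({x..x + 1} \<times> {y1..y2}) (x + 1, y2) (x, y2)"
  by (rule ham_connected_join[OF ham_connected_sym[OF ham_connected_column] ham_connected_column])
    (auto simp: sg_adj_def)

lemma ham_connected_two_columns_from_second:
  assumes "y1 < y2"
  shows "ham_connected ({x..x + 1} \<times> {y1..y2}) (x + 1, y2 - 1) (x, y2)"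
proof -
  have "ham_connected ({(x + 1, y2)} \<union> {(x, y2)}) (x + 1, y2) (x, y2)"
    by (rule ham_connected_join[OF ham_connected_singleton ham_connected_singleton])
      (auto simp: sg_adj_def)
  with assms show ?thesis
    by (intro ham_connected_join[OF ham_connected_two_columns]) (auto simp: sg_adj_def)
qed

lemma ham_connected_involution:
  assumes "ham_connected V s t" "f ` V \<subseteq> V" "\<And>v. f (f v) = v"
    and "\<And>u v. sg_adj u v \<Longrightarrow> sg_adj (f u) (f v)"
  shows "ham_connected V (f s) (f t)"
proof -
  have "inj_on f V"
    by (metis assms(3) inj_on_inverseI)
  moreover have "V \<subseteq> f ` V"
    by (metis assms(2,3) image_eqI image_subset_iff subsetI)
  then have "f ` V = V"
    using assms(2) by blast
  ultimately show ?thesis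
    using ham_connected_image[of V s t f] assms(1,4) by simp
qed

lemma ham_connected_rect_flip_x:
  assumes "ham_connected ({x1..x2} \<times> {y1..y2}) (a, b) (c, d)"
  shows "ham_connected ({x1..x2} \<times> {y1..y2}) (x1 + x2 - a, b) (x1 + x2 - c, d)"
  using ham_connected_involution[OF assms, of "\<lambda>(x, y). (x1 + x2 - x, y)"]
  by (force simp: sg_adj_def)

lemma ham_connected_rect_flip_y:
  assumes "ham_connected ({x1..x2} \<times> {y1..y2}) (a, b) (c, d)"
  shows "ham_connected ({x1..x2} \<times> {y1..y2}) (a, y1 + y2 - b) (c, y1 + y2 - d)"
  using ham_connected_involution[OF assms, of "\<lambda>(x, y). (x, y1 + y2 - y)"]
  by (force simp: sg_adj_def)

lemma ham_connected_rect_top_left: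
  assumes "x1 < x2" "y1 < y2" "(a, b) \<in> {x1..x2} \<times> {y1..y2}" "(a, b) \<noteq> (x1, y2)"
  shows "ham_connected ({x1..x2} \<times> {y1..y2}) (a, b) (x1, y2)"
  using assms
proof (induction "nat (x2 - x1 + (y2 - y1))" arbitrary: x1 x2 y1 y2 a b rule: less_induct)
  case less
  \<comment> \<open>Peeling the top row (left column) requires a path to the top-right (bottom-left) corner of
    the rest, obtained by reflecting the induction hypothesis.\<close>
  consider (drop_top_row) "b < y2" "y1 + 2 \<le> y2" "(a, b) \<noteq> (x2, y2 - 1)"
    | (drop_left_column) "x1 < a" "x1 + 2 \<le> x2" "(a, b) \<noteq> (x1 + 1, y1)"
    | (two_rows) "y2 = y1 + 1" "(a, b) = (x1, y1)"
    | (two_rows_from_second) "y2 = y1 + 1" "x1 + 2 \<le> x2" "(a, b) = (x1 + 1, y1)"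
    | (two_columns) "x2 = x1 + 1" "(a, b) = (x2, y2)"
    | (two_columns_from_second) "x2 = x1 + 1" "(a, b) = (x2, y2 - 1)"
    using less.prems unfolding mem_Times_iff atLeastAtMost_iff prod.inject fst_conv snd_conv by smt
  then show ?case
  proof cases
    case drop_top_row
    have "ham_connected ({x1..x2} \<times> {y1..y2 - 1}) (x1 + x2 - a, b) (x1, y2 - 1)"
      by (rule less.hyps) (use less.prems drop_top_row in auto)
    then have rest: "ham_connected ({x1..x2} \<times> {y1..y2 - 1}) (a, b) (x2, y2 - 1)"
      using ham_connected_rect_flip_x by fastforce
    have top: "ham_connected ({x1..x2} \<times> {y2}) (x2, y2) (x1, y2)"
      using ham_connected_sym[OF ham_connected_row, of x1 x2 y2] less.prems(1) by simp
    show ?thesis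
      by (rule ham_connected_join[OF rest top]) (use less.prems in \<open>auto simp: sg_adj_def\<close>)
  next
    case drop_left_column
    have "ham_connected ({x1 + 1..x2} \<times> {y1..y2}) (a, y1 + y2 - b) (x1 + 1, y2)"
      by (rule less.hyps) (use less.prems drop_left_column in auto)
    then have rest: "ham_connected ({x1 + 1..x2} \<times> {y1..y2}) (a, b) (x1 + 1, y1)"
      using ham_connected_rect_flip_y by fastforce
    have left: "ham_connected ({x1} \<times> {y1..y2}) (x1, y1) (x1, y2)"
      using ham_connected_column less.prems(2) by simp
    show ?thesis
      by (rule ham_connected_join[OF rest left]) (use less.prems in \<open>auto simp: sg_adj_def\<close>)
  qed (use less.prems ham_connected_two_rows ham_connected_two_rows_from_second
      ham_connected_two_columns ham_connected_two_columns_from_second in auto)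
qed

lemma ham_connected_rect_bottom_to_top_left:
  assumes "x1 \<le> x2" "y1 < y2"
  shows "ham_connected ({x1..x2} \<times> {y1..y2}) (x1, y1) (x1, y2)"
proof (cases "x1 = x2")
  case True
  then show ?thesis
    using ham_connected_column assms(2) by simp
next
  case False
  then show ?thesis
    using ham_connected_rect_top_left assms by simp
qed

lemma ham_connected_rect_exit_top_left:
  assumes "x1 < x2" "y1 \<le> y2" "s \<in> {x1..x2} \<times> {y1..y2}"
    and "y1 < y2 \<or> x2 = x1 + 1 \<or> s = (x2, y1)"
  shows "\<exists>e. sg_adj e (x1, y2 + 1) \<and> ham_connected ({x1..x2} \<times> {y1..y2}) s e"
proof -
  consider "y1 < y2" "s \<noteq> (x1, y2)" | "s = (x1, y2)" | "y1 = y2" "s \<noteq> (x1, y2)"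
    using assms(2) by fastforce
  then show ?thesis
  proof cases
    case 1
    then have "ham_connected ({x1..x2} \<times> {y1..y2}) s (x1, y2)"
      using ham_connected_rect_top_left assms by (cases s) auto
    moreover have "sg_adj (x1, y2) (x1, y2 + 1)"
      by (simp add: sg_adj_def)
    ultimately show ?thesis
      by blast
  next
    case 2
    have left: "ham_connected ({x1} \<times> {y1..y2}) (x1, y2) (x1, y1)"
      using ham_connected_sym[OF ham_connected_column, of y1 y2 x1] assms(2) by simp
    have right: "ham_connected ({x1 + 1..x2} \<times> {y1..y2}) (x1 + 1, y1) (x1 + 1, y2)"
      using ham_connected_rect_bottom_to_top_left ham_connected_singleton assms 2
      by (cases "y1 = y2") auto
    have "ham_connected ({x1..x2} \<times> {y1..y2}) s (x1 + 1, y2)"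
      unfolding 2
      by (rule ham_connected_join[OF left right]) (use assms in \<open>auto simp: sg_adj_def\<close>)
    moreover have "sg_adj (x1 + 1, y2) (x1, y2 + 1)"
      by (simp add: sg_adj_def)
    ultimately show ?thesis
      by blast
  next
    case 3
    then have "s = (x2, y1)"
      using assms by (cases s) auto
    with 3 have "ham_connected ({x1..x2} \<times> {y1..y2}) s (x1, y2)"
      using ham_connected_sym[OF ham_connected_row, of x1 x2 y1] assms(1) by simp
    moreover have "sg_adj (x1, y2) (x1, y2 + 1)"
      by (simp add: sg_adj_def)
    ultimately show ?thesis
      by blast
  qed
qed

lemma ham_connected_rect_exit_bottom_left:
  assumes "x1 < x2" "y1 \<le> y2" "s \<in> {x1..x2} \<times> {y1..y2}"
    and "y1 < y2 \<or> x2 = x1 + 1 \<or> s = (x2, y2)"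
  shows "\<exists>e. sg_adj e (x1, y1 - 1) \<and> ham_connected ({x1..x2} \<times> {y1..y2}) s e"
proof -
  obtain a b where s: "s = (a, b)"
    by fastforce
  obtain e where e: "sg_adj e (x1, y2 + 1)" "ham_connected ({x1..x2} \<times> {y1..y2}) (a, y1 + y2 - b) e"
    using ham_connected_rect_exit_top_left[of x1 x2 y1 y2 "(a, y1 + y2 - b)"] assms s by auto
  have "ham_connected ({x1..x2} \<times> {y1..y2}) s (fst e, y1 + y2 - snd e)"
    using ham_connected_rect_flip_y[of x1 x2 y1 y2 a "y1 + y2 - b" "fst e" "snd e"] e(2) s by simp
  moreover have "sg_adj (fst e, y1 + y2 - snd e) (x1, y1 - 1)"
    using e(1) by (cases e) (auto simp: sg_adj_def)
  ultimately show ?thesis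
    by blast
qed

lemma successively_sg_adj_crosses_row:
  assumes "successively sg_adj p" "p \<noteq> []" "snd (hd p) \<le> y" "y \<le> snd (last p)"
  shows "\<exists>v \<in> set p. snd v = y"
  using assms
proof (induction p)
  case (Cons v p)
  show ?case
  proof (cases "y \<le> snd v \<or> p = []")
    case True
    then show ?thesis
      using Cons.prems by auto
  next
    case False
    then have "snd (hd p) \<le> y"
      using Cons.prems(1) by (auto simp: successively_Cons sg_adj_def)
    then show ?thesis
      using Cons False by (auto simp: successively_Cons)
  qed
qed simp

lemma C_shape_eq:
  assumes "m - k = 1" "1 \<le> m" "0 \<le> c" "0 \<le> l" "c + l \<le> n"
  shows "C_shape m n k l c = {1..m} \<times> {1..c} \<union> {1} \<times> {c + 1..c + l} \<union> {1..m} \<times> {c + l + 1..n}"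
  using assms unfolding C_shape_def by auto

lemma C_shape_cut_vertex_middle:
  assumes "m - k = 1" "1 \<le> m" "1 \<le> c" "c + 1 \<le> y" "y \<le> c + l" "c + l < n"
  shows "is_cut_vertex (C_shape m n k l c) (1, y)"
proof -
  let ?C = "C_shape m n k l c"
  have "\<not> sg_connected (?C - {(1, y)})"
  proof
    assume "sg_connected (?C - {(1, y)})"
    moreover have "(1, 1) \<in> ?C - {(1, y)}" "(1, n) \<in> ?C - {(1, y)}"
      using assms unfolding C_shape_def by auto
    ultimately obtain p where p: "is_path_in (?C - {(1, y)}) p" "hd p = (1, 1)" "last p = (1, n)"
      unfolding sg_connected_def by blast
    then obtain v where "v \<in> set p" "snd v = y"
      using successively_sg_adj_crosses_row[of p y] assms by (auto simp: is_path_in_iff_successively)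
    moreover have "set p \<subseteq> ?C - {(1, y)}"
      using p(1) unfolding is_path_in_def by blast
    ultimately show False
      using assms unfolding C_shape_def by (cases v) auto
  qed
  moreover have "(1, y) \<in> ?C"
    using assms unfolding C_shape_def by auto
  ultimately show ?thesis
    unfolding is_cut_vertex_def by blast
qed

lemma C_shape_degree_bottom_corner:
  assumes "m - k = 1" "3 \<le> m" "1 \<le> l" "1 + l < n"
  shows "sg_degree (C_shape m n k l 1) (m, 1) = 1"
proof -
  have "{u \<in> C_shape m n k l 1. sg_adj (m, 1) u} = {(m - 1, 1)}"
    using assms unfolding C_shape_def sg_adj_def by auto
  then show ?thesis
    unfolding sg_degree_def by simp
qed

lemma C_shape_degree_top_corner:
  assumes "m - k = 1" "3 \<le> m" "1 \<le> c" "1 \<le> l" "n = c + l + 1"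
  shows "sg_degree (C_shape m n k l c) (m, n) = 1"
proof -
  have "{u \<in> C_shape m n k l c. sg_adj (m, n) u} = {(m - 1, n)}"
    using assms unfolding C_shape_def sg_adj_def by auto
  then show ?thesis
    unfolding sg_degree_def by simp
qed

lemma C_shape_non_cut_vertex_in_arms:
  assumes "m - k = 1" "2 \<le> m" "1 \<le> c" "1 \<le> l" "c + l < n"
    and "v \<in> C_shape m n k l c" "\<not> is_cut_vertex (C_shape m n k l c) v"
  shows "v \<in> {1..m} \<times> {1..c} \<or> v \<in> {1..m} \<times> {c + l + 1..n}"
proof (rule ccontr)
  assume "\<not> ?thesis"
  then have "v = (1, snd v)" "c + 1 \<le> snd v" "snd v \<le> c + l"
    using assms(6) C_shape_eq[of m k c l n] assms(1-5) by auto
  then show False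
    using assms(7) C_shape_cut_vertex_middle[of m k c "snd v" l n] assms(1-5) by auto
qed

lemma C_shape_ham_connected_across:
  assumes shape: "m - k = 1" "2 \<le> m" "1 \<le> c" "1 \<le> l" "c + l < n"
    and s: "s \<in> {1..m} \<times> {1..c}" and t: "t \<in> {1..m} \<times> {c + l + 1..n}"
    and leaves: "\<And>w. w \<in> C_shape m n k l c \<Longrightarrow> sg_degree (C_shape m n k l c) w = 1 \<Longrightarrow> w = s \<or> w = t"
  shows "ham_connected (C_shape m n k l c) s t"
proof -
  let ?C = "C_shape m n k l c"
  have C_eq: "?C = {1..m} \<times> {1..c} \<union> {1} \<times> {c + 1..c + l} \<union> {1..m} \<times> {c + l + 1..n}"
    using C_shape_eq shape by simp
  have "1 < c \<or> m = 2 \<or> s = (m, 1)"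
  proof (rule ccontr)
    assume "\<not> ?thesis"
    then have "c = 1" "3 \<le> m" "s \<noteq> (m, 1)"
      using shape by auto
    moreover have "(m, 1) \<in> ?C" "t \<noteq> (m, 1)"
      using shape t unfolding C_eq by auto
    ultimately show False
      using leaves[of "(m, 1)"] C_shape_degree_bottom_corner[of m k l n] shape by auto
  qed
  then obtain e1 where e1: "sg_adj e1 (1, c + 1)" "ham_connected ({1..m} \<times> {1..c}) s e1"
    using ham_connected_rect_exit_top_left[of 1 m 1 c s] shape s by auto
  have "c + l + 1 < n \<or> m = 2 \<or> t = (m, n)"
  proof (rule ccontr)
    assume "\<not> ?thesis"
    then have "n = c + l + 1" "3 \<le> m" "t \<noteq> (m, n)"
      using shape by auto
    moreover have "(m, n) \<in> ?C" "s \<noteq> (m, n)"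
      using shape s unfolding C_eq by auto
    ultimately show False
      using leaves[of "(m, n)"] C_shape_degree_top_corner[of m k c l n] shape by auto
  qed
  then obtain e2 where e2: "sg_adj e2 (1, c + l)" "ham_connected ({1..m} \<times> {c + l + 1..n}) t e2"
    using ham_connected_rect_exit_bottom_left[of 1 m "c + l + 1" n t] shape t by auto
  have "ham_connected ({1} \<times> {c + 1..c + l} \<union> {1..m} \<times> {c + l + 1..n}) (1, c + 1) t"
    by (rule ham_connected_join[OF ham_connected_column ham_connected_sym[OF e2(2)]])
      (use shape e2(1) in \<open>auto simp: sg_adj_commute\<close>)
  then show ?thesis
    by (rule ham_connected_join[OF e1(2)]) (use shape e1(1) in \<open>auto simp: C_eq\<close>)
qed

theorem lemma8:
  fixes m n k l c :: int and s t :: vtx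
  assumes "m \<ge> 2" and "n \<ge> 3" and "k \<ge> 1" and "l \<ge> 1" and "c \<ge> 1"
    and "n - l - c \<ge> 1"
    and "m - k = 1"
    and "s \<in> C_shape m n k l c" and "t \<in> C_shape m n k l c" and "s \<noteq> t"
    and "fst s \<le> fst t"
    and notF1: "\<not> (is_cut_vertex (C_shape m n k l c) s \<or> is_cut_vertex (C_shape m n k l c) t
                   \<or> is_vertex_cut (C_shape m n k l c) {s, t})"
    and notF3: "\<not> (\<exists>w \<in> C_shape m n k l c. sg_degree (C_shape m n k l c) w = 1 \<and> w \<noteq> s \<and> w \<noteq> t)"
    and notF9: "\<not> (m - k = 1 \<and> ((snd s \<le> c \<and> snd t \<le> c) \<or> (snd s > c + l \<and> snd t > c + l)))"
  shows "\<exists>p. is_ham_path (C_shape m n k l c) s t p"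
proof -
  let ?C = "C_shape m n k l c"
  have shape: "m - k = 1" "2 \<le> m" "1 \<le> c" "1 \<le> l" "c + l < n"
    using assms(1,4-7) by auto
  have leaves: "\<And>w. w \<in> ?C \<Longrightarrow> sg_degree ?C w = 1 \<Longrightarrow> w = s \<or> w = t"
    using notF3 by blast
  have "s \<in> {1..m} \<times> {1..c} \<and> t \<in> {1..m} \<times> {c + l + 1..n}
      \<or> t \<in> {1..m} \<times> {1..c} \<and> s \<in> {1..m} \<times> {c + l + 1..n}"
    using C_shape_non_cut_vertex_in_arms[OF shape, of s] C_shape_non_cut_vertex_in_arms[OF shape, of t]
      assms(8,9) notF1 notF9 shape(1) by auto
  then have "ham_connected ?C s t"
  proof
    assume "s \<in> {1..m} \<times> {1..c} \<and> t \<in> {1..m} \<times> {c + l + 1..n}"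
    then show ?thesis
      using C_shape_ham_connected_across[OF shape, of s t] leaves by blast
  next
    assume "t \<in> {1..m} \<times> {1..c} \<and> s \<in> {1..m} \<times> {c + l + 1..n}"
    then show ?thesis
      using ham_connected_sym C_shape_ham_connected_across[OF shape, of t s] leaves by blast
  qed
  then show ?thesis
    unfolding ham_connected_def .
qed

end
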